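(* Consider $2$ agents with additive, normalized (not necessarily identical) valuations, and online algorithms without access to predictions. For any given $a\in(0,1]$, there is no online algorithm that guarantees an $a$-EFX allocation, even if the time horizon $T$ is known to the algorithm in advance.
   Context: Online fair division model: there is a set $N=[n]$ of agents and goods $g_1,\dots,g_T$ arriving one per time step. Each agent $i$ has an additive normalized valuation $v_i$ ($v_i(g_t)\ge0$, $\sum_{t=1}^T v_i(g_t)=1$, $v_i(S)=\sum_{g\in S}v_i(g)$). When $g_t$ arrives, the values $v_i(g_t)$ of all agents are revealed and $g_t$ must be immediately and irrevocably allocated to one agent. For a bundle $S\ne\emptyset$ and valuation $f$, $\bar S^f=S\setminus\{g\}$ with $g\in\arg\max_{g'\in S}f(S\setminus\{g'\})$, and $\bar\emptyset^f=\emptyset$. For $a\in[0,1]$, an allocation $(A_1,\dots,A_n)$ is $a$-EFX if $v_i(A_i)\ge a\cdot v_i(\bar{A_j}^{v_i})$ for all $i,j$. An algorithm guarantees an $a$-EFX allocation if for every admissible input the final allocation is $a$-EFX with respect to the true valuations. *)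

theory Defs
  imports Complex_Main
begin

(* Two agents, encoded as bool (False = agent 1, True = agent 2).
   Goods g_1..g_T are indexed 0..T-1.  A valuation profile is
   v :: bool => nat => real, with v i t the value of agent i for good t. *)

type_synonym agent = bool
type_synonym profile = "agent \<Rightarrow> nat \<Rightarrow> real"

definition normalized :: "nat \<Rightarrow> profile \<Rightarrow> bool" where
  "normalized T v \<longleftrightarrow> (\<forall>i t. v i t \<ge> 0) \<and> (\<forall>i. (\<Sum>t<T. v i t) = 1)"

definition val :: "profile \<Rightarrow> agent \<Rightarrow> nat set \<Rightarrow> real" where
  "val v i S = (\<Sum>g\<in>S. v i g)"

definition bar :: "(nat set \<Rightarrow> real) \<Rightarrow> nat set \<Rightarrow> nat set" where
  "bar f S = (if S = {} then {} else S - {ARG_MAX (\<lambda>g. f (S - {g})) g. g \<in> S})"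

definition a_EFX :: "real \<Rightarrow> profile \<Rightarrow> (agent \<Rightarrow> nat set) \<Rightarrow> bool" where
  "a_EFX a v A \<longleftrightarrow> (\<forall>i j. val v i (A i) \<ge> a * val v i (bar (val v i) (A j)))"

(* A deterministic online algorithm that knows the horizon T:
   alg T h, where h is the list of revealed value pairs (v_1(g_s), v_2(g_s))
   for s = 1..t, returns the agent receiving g_t. *)
type_synonym online_alg = "nat \<Rightarrow> (real \<times> real) list \<Rightarrow> agent"

definition history :: "profile \<Rightarrow> nat \<Rightarrow> (real \<times> real) list" where
  "history v t = map (\<lambda>s. (v False s, v True s)) [0..<Suc t]"

definition run_alg :: "online_alg \<Rightarrow> nat \<Rightarrow> profile \<Rightarrow> agent \<Rightarrow> nat set" where
  "run_alg alg T v i = {t. t < T \<and> alg T (history v t) = i}"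

end

theory Submission
  imports Defs
begin

text \<open>
  Fix \<open>N \<ge> 3\<close> with \<open>1/N < a (1 - 1/N)\<close> and the horizon \<open>T = N + 1\<close>. The first good is
  worthless to both agents; let \<open>p\<close> be the agent who receives it and \<open>q\<close> the other one.
  Since \<open>p\<close>'s bundle now contains a good worthless to \<open>q\<close>, \<open>q\<close> is satisfied only with a
  bundle worth at least an \<open>a\<close>-fraction of \<open>p\<close>'s bundle. The adversary lets \<open>q\<close> value the
  goods \<open>1, \<dots>, N\<close> at \<open>1/N\<close> each and \<open>p\<close> value only the last two goods, at \<open>1/2\<close> each.
  If the algorithm gives all goods \<open>1, \<dots>, N - 2\<close> to \<open>p\<close>, then either \<open>q\<close> ends up with
  at most one good (and envies \<open>p\<close>) or \<open>q\<close> gets both valuable goods of \<open>p\<close> (and \<open>p\<close>, having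
  nothing, envies \<open>q\<close> even after removing one of them). Otherwise, at the first good
  \<open>k \<le> N - 2\<close> given to \<open>q\<close>, the adversary switches: good \<open>k + 1\<close> carries all of \<open>p\<close>'s
  value and all of \<open>q\<close>'s remaining value, and nothing follows. Whoever does not get
  good \<open>k + 1\<close> violates \<open>a\<close>-EFX.
\<close>

lemma val_remove_le_val_bar:
  assumes "finite S" "g \<in> S"
  shows "val v i (S - {g}) \<le> val v i (bar (val v i) S)"
proof -
  let ?f = "\<lambda>g. val v i (S - {g})"
  obtain x where x: "x \<in> S" "?f x = Max (?f ` S)"
    using Max_in[of "?f ` S"] assms by fastforce
  have x_max: "?f y \<le> ?f x" if "y \<in> S" for y
    using x(2) that assms(1) by simp
  have "?f g \<le> ?f (ARG_MAX ?f g. g \<in> S)"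
    by (rule arg_maxI[of "\<lambda>g. g \<in> S" x]) (use x x_max assms(2) in \<open>auto simp: not_less\<close>)
  then show ?thesis
    using assms(2) unfolding bar_def by auto
qed

lemma not_a_EFX_by_removal:
  assumes "0 \<le> a" "finite (A j)" "g \<in> A j"
    and "val v i (A i) < a * (val v i (A j) - v i g)"
  shows "\<not> a_EFX a v A"
proof
  assume "a_EFX a v A"
  then have envy_free: "a * val v i (bar (val v i) (A j)) \<le> val v i (A i)"
    unfolding a_EFX_def by blast
  have "val v i (A j) - v i g \<le> val v i (bar (val v i) (A j))"
    using val_remove_le_val_bar[OF assms(2,3)] assms(2,3)
    by (simp add: val_def sum_diff1)
  then have "a * (val v i (A j) - v i g) \<le> a * val v i (bar (val v i) (A j))"
    using assms(1) by (rule mult_left_mono)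
  with envy_free assms(4) show False
    by linarith
qed

lemma finite_run_alg: "finite (run_alg alg T v i)"
  unfolding run_alg_def by auto

lemma run_alg_disjoint: "run_alg alg T v i \<inter> run_alg alg T v (\<not> i) = {}"
  unfolding run_alg_def by auto

lemma val_run_alg_add:
  assumes "normalized T v"
  shows "val v i (run_alg alg T v j) + val v i (run_alg alg T v (\<not> j)) = 1"
proof -
  have "run_alg alg T v j \<union> run_alg alg T v (\<not> j) = {..<T}"
    unfolding run_alg_def by auto
  then show ?thesis
    using assms finite_run_alg run_alg_disjoint unfolding normalized_def val_def
    by (metis sum.union_disjoint)
qed

lemma run_alg_not_a_EFX:
  assumes "normalized T v" "0 \<le> a" "g \<in> run_alg alg T v (\<not> i)"
    and "val v i (run_alg alg T v i) < a * (1 - val v i (run_alg alg T v i) - v i g)"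
  shows "\<not> a_EFX a v (run_alg alg T v)"
proof -
  have "val v i (run_alg alg T v (\<not> i)) = 1 - val v i (run_alg alg T v i)"
    using val_run_alg_add[OF assms(1), of i alg i] by simp
  then show ?thesis
    using assms finite_run_alg by (intro not_a_EFX_by_removal[of a _ "\<not> i" g v i]) simp_all
qed

lemma run_alg_prefix_cong:
  assumes "\<And>i s. s \<le> t \<Longrightarrow> v i s = w i s"
  shows "t \<in> run_alg alg T v j \<longleftrightarrow> t \<in> run_alg alg T w j"
proof -
  have "history v t = history w t"
    unfolding history_def using assms by auto
  then show ?thesis
    unfolding run_alg_def by simp
qed

lemma sum_if_mem_const:
  fixes c :: "'a :: semiring_1"
  assumes "finite A" "S \<subseteq> A"
  shows "(\<Sum>t\<in>A. if t \<in> S then c else 0) = of_nat (card S) * c"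
  using assms by (simp add: sum.inter_restrict[symmetric] Int_absorb1)

lemma adversary_size_exists:
  fixes a :: real
  assumes "0 < a"
  obtains N :: nat where "3 \<le> N" "1 / real N < a * (1 - 1 / real N)"
proof -
  obtain N :: nat where N: "1 / a + 2 < real N"
    using reals_Archimedean2 by blast
  have "0 < 1 / a" using assms by simp
  then have "3 \<le> N" using N by linarith
  moreover have "1 < a * (real N - 1)"
    using N assms by (simp add: field_simps)
  then have "1 / real N < a * (1 - 1 / real N)"
    using \<open>3 \<le> N\<close> by (simp add: field_simps)
  ultimately show thesis by (rule that)
qed

locale efx_adversary =
  fixes a :: real and N :: nat and alg :: online_alg
  assumes a_pos: "0 < a" and N_ge_3: "3 \<le> N"
    and N_large: "1 / real N < a * (1 - 1 / real N)"
begin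

abbreviation T :: nat where "T \<equiv> Suc N"

definition p :: agent where "p = alg T [(0, 0)]"

definition base :: profile where
  "base i t =
    (if i = p then (if t \<in> {N - 1, N} then 1 / 2 else 0)
     else if t \<in> {1..N} then 1 / real N else 0)"

definition switch :: "nat \<Rightarrow> profile" where
  "switch k i t =
    (if i = p then (if t = Suc k then 1 else 0)
     else if t \<in> {1..k} then 1 / real N
     else if t = Suc k then 1 - real k / real N else 0)"

lemma normalized_base: "normalized T base"
  unfolding normalized_def
proof (intro conjI allI)
  fix i t
  show "0 \<le> base i t"
    unfolding base_def by simp
next
  fix i
  show "(\<Sum>t<T. base i t) = 1"
  proof (cases "i = p")
    case True
    have "(\<Sum>t<T. base i t) = (\<Sum>t<T. if t \<in> {N - 1, N} then 1 / 2 else 0)"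
      unfolding base_def using True by simp
    also have "\<dots> = 1"
      using N_ge_3 by (subst sum_if_mem_const) auto
    finally show ?thesis .
  next
    case False
    then have "(\<Sum>t<T. base i t) = (\<Sum>t<T. if t \<in> {1..N} then 1 / real N else 0)"
      unfolding base_def by simp
    also have "\<dots> = 1"
      using N_ge_3 by (subst sum_if_mem_const) auto
    finally show ?thesis .
  qed
qed

lemma normalized_switch:
  assumes "k < N"
  shows "normalized T (switch k)"
  unfolding normalized_def
proof (intro conjI allI)
  fix i t
  show "0 \<le> switch k i t"
    using assms unfolding switch_def by simp
next
  fix i
  show "(\<Sum>t<T. switch k i t) = 1"
  proof (cases "i = p")
    case True
    then show ?thesis
      using assms unfolding switch_def by simp
  next
    case False
    have "(\<Sum>t<T. switch k i t) = (\<Sum>t<T. if t \<in> {1..k} then 1 / real N else 0)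
        + (\<Sum>t<T. if t \<in> {Suc k} then 1 - real k / real N else 0)"
      unfolding sum.distrib[symmetric] by (rule sum.cong) (auto simp: switch_def False)
    also have "\<dots> = 1"
      using assms by (subst (1 2) sum_if_mem_const) auto
    finally show ?thesis .
  qed
qed

lemma switch_eq_base: "t \<le> k \<Longrightarrow> k \<le> N - 2 \<Longrightarrow> switch k i t = base i t"
  using N_ge_3 unfolding switch_def base_def by auto

lemma first_good_to_p:
  assumes "\<And>i. v i 0 = 0"
  shows "0 \<in> run_alg alg T v p"
  using assms unfolding run_alg_def history_def p_def by simp

lemma switch_not_a_EFX:
  assumes k: "1 \<le> k" "k \<le> N - 2" "alg T (history base k) = (\<not> p)"
    and before_k: "\<And>j. 1 \<le> j \<Longrightarrow> j < k \<Longrightarrow> alg T (history base j) = p"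
  shows "\<not> a_EFX a (switch k) (run_alg alg T (switch k))"
proof -
  let ?A = "run_alg alg T (switch k)"
  have as_base: "t \<in> ?A i \<longleftrightarrow> t \<in> run_alg alg T base i" if "t \<le> k" for t i
    using that k(2) switch_eq_base by (intro run_alg_prefix_cong) auto
  have zero_p: "0 \<in> ?A p"
    by (rule first_good_to_p) (simp add: switch_def)
  have before_k_p: "j \<in> ?A p" if "j < k" for j
    using that zero_p as_base[of j] before_k[of j] N_ge_3 k(2)
    by (cases "j = 0") (auto simp: run_alg_def)
  have k_q: "k \<in> ?A (\<not> p)"
    using as_base[of k] k N_ge_3 by (simp add: run_alg_def)
  have norm: "normalized T (switch k)"
    using k(2) N_ge_3 by (intro normalized_switch) simp
  show ?thesis
  proof (cases "Suc k \<in> ?A p")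
    case True
    have "switch k (\<not> p) t = (if t = k then 1 / real N else 0)" if "t \<in> ?A (\<not> p)" for t
    proof -
      have "\<not> t < k" "t \<noteq> Suc k"
        using that True before_k_p by (auto simp: run_alg_def)
      then show ?thesis
        using k(1) unfolding switch_def by auto
    qed
    then have "val (switch k) (\<not> p) (?A (\<not> p)) = 1 / real N"
      using k_q finite_run_alg unfolding val_def by (simp cong: sum.cong)
    then show ?thesis
      using N_large a_pos zero_p
      by (intro run_alg_not_a_EFX[OF norm, where i = "\<not> p" and g = 0]) (simp_all add: switch_def)
  next
    case False
    then have "Suc k \<notin> ?A p" by simp
    then have "val (switch k) p (?A p) = 0"
      unfolding val_def by (intro sum.neutral) (auto simp: switch_def)
    then show ?thesis
      using a_pos k_q
      by (intro run_alg_not_a_EFX[OF norm, where i = p and g = k]) (simp_all add: switch_def)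
  qed
qed

lemma base_not_a_EFX:
  assumes all_p: "\<And>j. 1 \<le> j \<Longrightarrow> j \<le> N - 2 \<Longrightarrow> alg T (history base j) = p"
  shows "\<not> a_EFX a base (run_alg alg T base)"
proof -
  let ?A = "run_alg alg T base"
  have zero_p: "0 \<in> ?A p"
    using N_ge_3 by (intro first_good_to_p) (simp add: base_def)
  have q_last_two: "?A (\<not> p) \<subseteq> {N - 1, N}"
  proof
    fix t
    assume t: "t \<in> ?A (\<not> p)"
    then have not_p: "t \<notin> ?A p"
      using run_alg_disjoint by blast
    have "t \<in> ?A p" if "1 \<le> t" "t \<le> N - 2"
      using t that all_p unfolding run_alg_def by simp
    then have "\<not> (1 \<le> t \<and> t \<le> N - 2)"
      using not_p by blast
    moreover have "t \<noteq> 0"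
      using not_p zero_p by metis
    moreover have "t < T"
      using t by (simp add: run_alg_def)
    ultimately show "t \<in> {N - 1, N}"
      using N_ge_3 by auto
  qed
  show ?thesis
  proof (cases "N - 1 \<in> ?A (\<not> p) \<and> N \<in> ?A (\<not> p)")
    case True
    then have "val base p (?A p) = 0"
      unfolding val_def by (intro sum.neutral) (auto simp: base_def run_alg_def)
    then show ?thesis
      using a_pos True N_ge_3
      by (intro run_alg_not_a_EFX[OF normalized_base, where i = p and g = "N - 1"]) (simp_all add: base_def)
  next
    case False
    then obtain m where m: "m \<in> {N - 1, N}" "?A (\<not> p) \<subseteq> {m}"
      using q_last_two by blast
    have "val base (\<not> p) (?A (\<not> p)) \<le> val base (\<not> p) {m}"
      unfolding val_def using m(2) by (intro sum_mono2) (auto simp: base_def)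
    also have "\<dots> = 1 / real N"
      using m(1) N_ge_3 by (auto simp: val_def base_def)
    finally have small: "val base (\<not> p) (?A (\<not> p)) \<le> 1 / real N" .
    have "a * (1 - 1 / real N) \<le> a * (1 - val base (\<not> p) (?A (\<not> p)))"
      using small a_pos by (intro mult_left_mono) auto
    with small N_large have "val base (\<not> p) (?A (\<not> p)) < a * (1 - val base (\<not> p) (?A (\<not> p)))"
      by linarith
    then show ?thesis
      using a_pos zero_p
      by (intro run_alg_not_a_EFX[OF normalized_base, where i = "\<not> p" and g = 0]) (simp_all add: base_def)
  qed
qed

lemma exists_profile_not_a_EFX:
  "\<exists>v. normalized T v \<and> \<not> a_EFX a v (run_alg alg T v)"
proof (cases "\<exists>k. 1 \<le> k \<and> k \<le> N - 2 \<and> alg T (history base k) = (\<not> p)")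
  case True
  obtain k where "1 \<le> k \<and> k \<le> N - 2 \<and> alg T (history base k) = (\<not> p)"
    and least: "\<forall>j<k. \<not> (1 \<le> j \<and> j \<le> N - 2 \<and> alg T (history base j) = (\<not> p))"
    using exists_least_iff[THEN iffD1, OF True] by blast
  then have k: "1 \<le> k" "k \<le> N - 2" "alg T (history base k) = (\<not> p)"
    by simp_all
  have "alg T (history base j) = p" if "1 \<le> j" "j < k" for j
    using least that k(2) by auto
  then have "\<not> a_EFX a (switch k) (run_alg alg T (switch k))"
    by (rule switch_not_a_EFX[OF k])
  moreover have "normalized T (switch k)"
    using k(2) N_ge_3 by (intro normalized_switch) simp
  ultimately show ?thesis by blast
next
  case False
  then have "alg T (history base j) = p" if "1 \<le> j" "j \<le> N - 2" for j
    using that by auto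
  then show ?thesis
    using base_not_a_EFX normalized_base by blast
qed

end

theorem theorem3p4:
  fixes a :: real
  assumes "0 < a" and "a \<le> 1"
  shows "\<forall>alg :: online_alg. \<exists>T v. normalized T v \<and> \<not> a_EFX a v (run_alg alg T v)"
proof
  fix alg :: online_alg
  obtain N where "3 \<le> N" "1 / real N < a * (1 - 1 / real N)"
    using adversary_size_exists[OF assms(1)] .
  then have "efx_adversary a N"
    using assms(1) by unfold_locales
  then show "\<exists>T v. normalized T v \<and> \<not> a_EFX a v (run_alg alg T v)"
    by (blast dest: efx_adversary.exists_profile_not_a_EFX)
qed

end
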